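(* Let $\mathcal V$ be a multivector field on $X$ and let $S$ be an isolated invariant set. Then $(\operatorname{cl}S,\operatorname{mo}S)$ is a saturated index pair for $S$.
   Context: $X$ is a finite $T_0$ topological space. For $A\subset X$, $\operatorname{cl}A$ is its closure and $\operatorname{mo}A:=\operatorname{cl}A\setminus A$. $A$ is locally closed if it is the intersection of an open and a closed subset of $X$. $H$ denotes relative singular homology. A multivector is a nonempty locally closed subset of $X$; a multivector field $\mathcal V$ on $X$ is a partition of $X$ into multivectors. For $x\in X$, $[x]$ denotes the element of $\mathcal V$ containing $x$. A multivector $V$ is critical if $H(\operatorname{cl}V,\operatorname{mo}V)\neq0$, regular otherwise. Put $\Pi_{\mathcal V}(x):=[x]\cup\operatorname{cl}\{x\}$ and $\Pi_{\mathcal V}(A):=\bigcup_{x\in A}\Pi_{\mathcal V}(x)$. A $\mathbb Z$-interval is $\mathbb Z\cap I$ for a real interval $I$. A solution in $A\subset X$ is a map $\varphi:D\to A$ on a $\mathbb Z$-interval $D$ with $\varphi(i+1)\in\Pi_{\mathcal V}(\varphi(i))$ whenever $i,i+1\in D$; it is full if $D=\mathbb Z$, and a path if $D$ is bounded, its endpoints being $\varphi(\min D)$ and $\varphi(\max D)$. A full solution $\varphi$ is essential if for every $t\in\mathbb Z$ with $[\varphi(t)]$ regular, the set $\{s\in\mathbb Z:\varphi(s)\notin[\varphi(t)]\}$ is unbounded below and unbounded above. $\operatorname{Inv}A$ is the set of $x\in A$ such that there is an essential full solution $\varphi$ with image in $A$ and $\varphi(0)=x$; $A$ is invariant if $\operatorname{Inv}A=A$.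 A closed set $N$ isolates an invariant set $S\subset N$ if (a) every path in $N$ with both endpoints in $S$ has image contained in $S$, and (b) $\Pi_{\mathcal V}(S)\subset N$. An invariant set is an isolated invariant set if some closed set isolates it. An index pair for an isolated invariant set $S$ is a pair $(P_1,P_2)$ of closed subsets of $X$ with $P_2\subset P_1$ such that (IP1) if $x\in P_2$ and $y\in\Pi_{\mathcal V}(x)\cap P_1$ then $y\in P_2$; (IP2) if $x\in P_1$ and $\Pi_{\mathcal V}(x)\setminus P_1\neq\emptyset$ then $x\in P_2$; (IP3) $S=\operatorname{Inv}(P_1\setminus P_2)$. It is saturated if $S=P_1\setminus P_2$. *)

theory Defs
  imports "HOL-Analysis.Analysis" "HOL-Homology.Homology"
begin

definition locally_closed_in :: "'a topology \<Rightarrow> 'a set \<Rightarrow> bool" where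
  "locally_closed_in X A \<longleftrightarrow> (\<exists>U C. openin X U \<and> closedin X C \<and> A = U \<inter> C)"

definition mouth :: "'a topology \<Rightarrow> 'a set \<Rightarrow> 'a set" where
  "mouth X A = X closure_of A - A"

definition multivector :: "'a topology \<Rightarrow> 'a set \<Rightarrow> bool" where
  "multivector X A \<longleftrightarrow> A \<noteq> {} \<and> A \<subseteq> topspace X \<and> locally_closed_in X A"

definition multivector_field :: "'a topology \<Rightarrow> 'a set set \<Rightarrow> bool" where
  "multivector_field X V \<longleftrightarrow> (\<forall>A\<in>V. multivector X A) \<and> \<Union>V = topspace X \<and>
     (\<forall>A\<in>V. \<forall>B\<in>V. A \<noteq> B \<longrightarrow> A \<inter> B = {})"

definition cell :: "'a set set \<Rightarrow> 'a \<Rightarrow> 'a set" where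
  "cell V x = (THE A. A \<in> V \<and> x \<in> A)"

definition critical :: "'a topology \<Rightarrow> 'a set \<Rightarrow> bool" where
  "critical X A \<longleftrightarrow>
     (\<exists>p. \<not> trivial_group (relative_homology_group p (subtopology X (X closure_of A)) (mouth X A)))"

definition regular :: "'a topology \<Rightarrow> 'a set \<Rightarrow> bool" where
  "regular X A \<longleftrightarrow> \<not> critical X A"

definition Pi_pt :: "'a topology \<Rightarrow> 'a set set \<Rightarrow> 'a \<Rightarrow> 'a set" where
  "Pi_pt X V x = cell V x \<union> X closure_of {x}"

definition Pi_set :: "'a topology \<Rightarrow> 'a set set \<Rightarrow> 'a set \<Rightarrow> 'a set" where
  "Pi_set X V A = (\<Union>x\<in>A. Pi_pt X V x)"

definition Z_interval :: "int set \<Rightarrow> bool" where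
  "Z_interval D \<longleftrightarrow> (\<forall>i\<in>D. \<forall>k\<in>D. \<forall>j. i \<le> j \<and> j \<le> k \<longrightarrow> j \<in> D)"

definition solution :: "'a topology \<Rightarrow> 'a set set \<Rightarrow> 'a set \<Rightarrow> int set \<Rightarrow> (int \<Rightarrow> 'a) \<Rightarrow> bool" where
  "solution X V A D phi \<longleftrightarrow> Z_interval D \<and> phi ` D \<subseteq> A \<and>
     (\<forall>i. i \<in> D \<and> i + 1 \<in> D \<longrightarrow> phi (i + 1) \<in> Pi_pt X V (phi i))"

definition full_solution :: "'a topology \<Rightarrow> 'a set set \<Rightarrow> 'a set \<Rightarrow> (int \<Rightarrow> 'a) \<Rightarrow> bool" where
  "full_solution X V A phi \<longleftrightarrow> solution X V A UNIV phi"

text \<open>A path: a solution on a bounded (nonempty, so that endpoints exist) Z-interval.\<close>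
definition path_in :: "'a topology \<Rightarrow> 'a set set \<Rightarrow> 'a set \<Rightarrow> int set \<Rightarrow> (int \<Rightarrow> 'a) \<Rightarrow> bool" where
  "path_in X V A D phi \<longleftrightarrow> solution X V A D phi \<and> D \<noteq> {} \<and> bdd_above D \<and> bdd_below D"

definition essential :: "'a topology \<Rightarrow> 'a set set \<Rightarrow> (int \<Rightarrow> 'a) \<Rightarrow> bool" where
  "essential X V phi \<longleftrightarrow> (\<forall>t. regular X (cell V (phi t)) \<longrightarrow>
      (\<not> bdd_below {s. phi s \<notin> cell V (phi t)} \<and> \<not> bdd_above {s. phi s \<notin> cell V (phi t)}))"

definition Inv :: "'a topology \<Rightarrow> 'a set set \<Rightarrow> 'a set \<Rightarrow> 'a set" where
  "Inv X V A = {x \<in> A. \<exists>phi. full_solution X V A phi \<and> essential X V phi \<and> phi 0 = x}"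

definition invariant :: "'a topology \<Rightarrow> 'a set set \<Rightarrow> 'a set \<Rightarrow> bool" where
  "invariant X V A \<longleftrightarrow> Inv X V A = A"

definition isolates :: "'a topology \<Rightarrow> 'a set set \<Rightarrow> 'a set \<Rightarrow> 'a set \<Rightarrow> bool" where
  "isolates X V N S \<longleftrightarrow> closedin X N \<and> S \<subseteq> N \<and>
     (\<forall>D phi. path_in X V N D phi \<and> phi (Min D) \<in> S \<and> phi (Max D) \<in> S \<longrightarrow> phi ` D \<subseteq> S) \<and>
     Pi_set X V S \<subseteq> N"

definition isolated_invariant :: "'a topology \<Rightarrow> 'a set set \<Rightarrow> 'a set \<Rightarrow> bool" where
  "isolated_invariant X V S \<longleftrightarrow> invariant X V S \<and> (\<exists>N. isolates X V N S)"

definition index_pair :: "'a topology \<Rightarrow> 'a set set \<Rightarrow> 'a set \<Rightarrow> 'a set \<Rightarrow> 'a set \<Rightarrow> bool" where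
  "index_pair X V S P1 P2 \<longleftrightarrow> closedin X P1 \<and> closedin X P2 \<and> P2 \<subseteq> P1 \<and>
     (\<forall>x y. x \<in> P2 \<and> y \<in> Pi_pt X V x \<inter> P1 \<longrightarrow> y \<in> P2) \<and>
     (\<forall>x. x \<in> P1 \<and> Pi_pt X V x - P1 \<noteq> {} \<longrightarrow> x \<in> P2) \<and>
     S = Inv X V (P1 - P2)"

definition saturated_index_pair :: "'a topology \<Rightarrow> 'a set set \<Rightarrow> 'a set \<Rightarrow> 'a set \<Rightarrow> 'a set \<Rightarrow> bool" where
  "saturated_index_pair X V S P1 P2 \<longleftrightarrow> index_pair X V S P1 P2 \<and> S = P1 - P2"

end

theory Submission
  imports Defs
begin

text \<open>A point of the mouth lies in the closure of some point s of S, so the path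
  s, x, y with y in S would force x into S by isolation. Hence nothing in the mouth
  reaches S in one step: the mouth is closed and invariant within cl S. Dually a point
  x of S can only leave cl S through its own multivector, and then the path x, y, x
  forces y into S.\<close>

lemma cell_in_field_and_mem:
  assumes "multivector_field X V" "x \<in> topspace X"
  shows "cell V x \<in> V" "x \<in> cell V x"
proof -
  obtain A where A: "A \<in> V" "x \<in> A"
    using assms unfolding multivector_field_def by blast
  have "cell V x = A"
    unfolding cell_def
    using assms(1) A unfolding multivector_field_def by (intro the_equality) blast+
  with A show "cell V x \<in> V" "x \<in> cell V x" by simp_all
qed

lemma cell_eq_cell:
  assumes "multivector_field X V" "x \<in> topspace X" "y \<in> cell V x"
  shows "cell V y = cell V x"
proof -
  have "y \<in> topspace X"
    using assms cell_in_field_and_mem(1)[OF assms(1,2)] unfolding multivector_field_def by blast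
  with assms show ?thesis
    using cell_in_field_and_mem[OF assms(1)] unfolding multivector_field_def by blast
qed

lemma isolates_subset_topspace:
  assumes "isolates X V N S"
  shows "S \<subseteq> topspace X"
proof -
  have "closedin X N" "S \<subseteq> N" using assms unfolding isolates_def by simp_all
  then show ?thesis using closedin_subset by blast
qed

lemma isolates_Pi_pt_step:
  assumes iso: "isolates X V N S"
    and "a \<in> S" "b \<in> Pi_pt X V a" "c \<in> Pi_pt X V b" "c \<in> S"
  shows "b \<in> S"
proof -
  define phi :: "int \<Rightarrow> _" where "phi i = (if i = 0 then a else if i = 1 then b else c)" for i
  define D :: "int set" where "D = {0, 1, 2}"
  have "b \<in> N"
    using iso assms(2,3) unfolding isolates_def Pi_set_def by blast
  with assms have "path_in X V N D phi"
    unfolding path_in_def solution_def Z_interval_def D_def phi_def isolates_def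
    by auto
  moreover have "phi (Min D) \<in> S" "phi (Max D) \<in> S"
    using assms(2,5) by (simp_all add: D_def phi_def)
  ultimately have "phi ` D \<subseteq> S"
    using iso unfolding isolates_def by blast
  then show ?thesis by (simp add: D_def phi_def)
qed

lemma closure_of_finite_eq_UN:
  assumes "finite S"
  shows "X closure_of S = (\<Union>s\<in>S. X closure_of {s})"
  using closure_of_Union[of "(\<lambda>s. {s}) ` S" X] assms by (simp add: image_image)

lemma isolates_Pi_pt_mouth_disjoint:
  assumes iso: "isolates X V N S" and "finite S" and x: "x \<in> mouth X S"
  shows "Pi_pt X V x \<inter> S = {}"
proof -
  obtain s where s: "s \<in> S" "x \<in> X closure_of {s}"
    using x closure_of_finite_eq_UN[OF \<open>finite S\<close>] unfolding mouth_def by blast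
  have "x \<in> Pi_pt X V s" using s unfolding Pi_pt_def by blast
  moreover have "x \<notin> S" using x unfolding mouth_def by blast
  ultimately show ?thesis
    using isolates_Pi_pt_step[OF iso s(1)] by blast
qed

lemma isolates_closedin_mouth:
  assumes "finite (topspace X)" and iso: "isolates X V N S"
  shows "closedin X (mouth X S)"
proof -
  have mo_top: "mouth X S \<subseteq> topspace X"
    unfolding mouth_def using closure_of_subset_topspace[of X S] by blast
  have "finite S"
    using isolates_subset_topspace[OF iso] assms(1) by (rule finite_subset)
  have "X closure_of (mouth X S) \<subseteq> mouth X S"
  proof
    fix z assume z: "z \<in> X closure_of (mouth X S)"
    obtain x where x: "x \<in> mouth X S" "z \<in> X closure_of {x}"
      using z closure_of_finite_eq_UN[OF finite_subset[OF mo_top assms(1)], of X] by blast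
    have "z \<notin> S"
      using isolates_Pi_pt_mouth_disjoint[OF iso \<open>finite S\<close> x(1)] x(2)
      unfolding Pi_pt_def by blast
    moreover have "X closure_of (mouth X S) \<subseteq> X closure_of S"
      unfolding mouth_def by (rule closure_of_minimal) auto
    ultimately have "z \<in> X closure_of S - S" using z by blast
    then show "z \<in> mouth X S" by (simp add: mouth_def)
  qed
  with mo_top show ?thesis
    by (simp add: closure_of_subset_eq[symmetric])
qed

lemma isolates_Pi_pt_subset_closure_of:
  assumes "multivector_field X V" and iso: "isolates X V N S" and x: "x \<in> S"
  shows "Pi_pt X V x \<subseteq> X closure_of S"
proof
  fix y assume y: "y \<in> Pi_pt X V x"
  have xT: "x \<in> topspace X"
    using isolates_subset_topspace[OF iso] x by blast
  show "y \<in> X closure_of S"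
  proof (cases "y \<in> cell V x")
    case True
    then have "cell V y = cell V x" by (rule cell_eq_cell[OF assms(1) xT])
    then have "x \<in> Pi_pt X V y"
      using cell_in_field_and_mem(2)[OF assms(1) xT] unfolding Pi_pt_def by simp
    then have "y \<in> S" using isolates_Pi_pt_step[OF iso x y] x by blast
    then show ?thesis
      using closure_of_subset[OF isolates_subset_topspace[OF iso]] by blast
  next
    case False
    then have "y \<in> X closure_of {x}" using y unfolding Pi_pt_def by blast
    then show ?thesis using closure_of_mono[of "{x}" S X] x by auto
  qed
qed

theorem proposition5p3:
  fixes X :: "'a topology" and V :: "'a set set" and S :: "'a set"
  assumes "finite (topspace X)" and "t0_space X"
    and "multivector_field X V"
    and "isolated_invariant X V S"
  shows "saturated_index_pair X V S (X closure_of S) (mouth X S)"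
proof -
  obtain N where iso: "isolates X V N S" and inv: "Inv X V S = S"
    using assms(4) unfolding isolated_invariant_def invariant_def by auto
  have S_top: "S \<subseteq> topspace X" using isolates_subset_topspace[OF iso] .
  then have "finite S" using assms(1) by (rule finite_subset)
  have saturated: "X closure_of S - mouth X S = S"
    using closure_of_subset[OF S_top] unfolding mouth_def by blast
  have IP1: "y \<in> mouth X S" if "x \<in> mouth X S" "y \<in> Pi_pt X V x \<inter> X closure_of S" for x y
    using that isolates_Pi_pt_mouth_disjoint[OF iso \<open>finite S\<close>] unfolding mouth_def by blast
  have IP2: "x \<in> mouth X S" if "x \<in> X closure_of S" "Pi_pt X V x - X closure_of S \<noteq> {}" for x
    using that isolates_Pi_pt_subset_closure_of[OF assms(3) iso] unfolding mouth_def by blast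
  show ?thesis
    unfolding saturated_index_pair_def index_pair_def
    using isolates_closedin_mouth[OF assms(1) iso] IP1 IP2 saturated inv
    by (auto simp: mouth_def)
qed

end
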